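(* Let $M\ge2$, $a_1,\dots,a_{M-1}\in\mathbb{C}$, let $\epsilon=1/\eta$ be a small complex parameter varying in a punctured neighborhood $V^*$ of $0$, and let $K\subset\mathbb{C}\setminus\{0\}$ be compact. Then the Euler–Cauchy equation $$z^Mv^{(M)}(z,\eta)+\sum_{k=1}^{M-1}a_kz^kv^{(k)}(z,\eta)-\eta^Mv(z,\eta)=0$$ has $M$ linearly independent WKB-solutions of the form $\psi_j=\exp\big[\sum_{k=0}^{\infty}h_{j,k}\epsilon^{k-1}\ln z\big]$, $\epsilon\in V^*$, $j=1,\dots,M$, where $h_{j,0}$ are the $M$ distinct $M$-th roots of $1$ and $h_{j,k}\in\mathbb{C}$, and the series $\sum_k h_{j,k}\epsilon^{k-1}$ converge, so that $\psi_j$ are convergent for all $z\in K$ and $\epsilon$ in a punctured neighborhood of $0$.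
   Context: For this operator ($\rho_M=z^M$) the relevant domain is $\Omega=\mathbb{C}\setminus\{0\}$; $\ln z$ denotes a branch of the logarithm. *)

theory Defs
  imports "HOL-Complex_Analysis.Complex_Analysis"
begin

definition euler_cauchy_lhs ::
  "nat \<Rightarrow> (nat \<Rightarrow> complex) \<Rightarrow> complex \<Rightarrow> (complex \<Rightarrow> complex) \<Rightarrow> complex \<Rightarrow> complex" where
  "euler_cauchy_lhs M a \<eta> v z =
     z ^ M * (deriv ^^ M) v z + (\<Sum>k = 1..M - 1. a k * z ^ k * (deriv ^^ k) v z) - \<eta> ^ M * v z"

definition log_branch_on :: "(complex \<Rightarrow> complex) \<Rightarrow> complex set \<Rightarrow> bool" where
  "log_branch_on L U \<longleftrightarrow> L holomorphic_on U \<and> (\<forall>z\<in>U. exp (L z) = z)"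

definition wkb_exponent :: "(nat \<Rightarrow> complex) \<Rightarrow> complex \<Rightarrow> complex" where
  "wkb_exponent h \<epsilon> = (\<Sum>k. h k * \<epsilon> powi (int k - 1))"

end

theory Submission
  imports Defs
begin

(* On a branch L of the logarithm, v = exp (c * L z) = z^c satisfies z^k v^(k) = c (c-1) ... (c-k+1) v,
   so v solves the equation iff P c = eta^M for the indicial polynomial P. Substituting c = 1/t
   turns this into t^M = eps^M q t with a polynomial q, q 0 = 1. Writing G t = t q(t)^(-1/M),
   which is locally invertible at 0, the solutions near 0 are t = G^-1 (eps / omega) for the M-th
   roots of unity omega, so c = mu(eps) / eps with mu holomorphic and mu 0 = omega; the h_(j,k)
   are the Taylor coefficients of mu. The M exponents are distinct, and exponentials with
   distinct exponents are linearly independent on the open set L(U). *)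

lemma log_branch_on_nonzero: "log_branch_on L U \<Longrightarrow> z \<in> U \<Longrightarrow> z \<noteq> 0"
  unfolding log_branch_on_def by (metis exp_not_eq_zero)

lemma log_branch_on_has_field_derivative:
  assumes "open U" "log_branch_on L U" "z \<in> U"
  shows "(L has_field_derivative 1 / z) (at z)"
proof -
  have hol: "L holomorphic_on U" and exp_L: "\<And>w. w \<in> U \<Longrightarrow> exp (L w) = w"
    using assms(2) unfolding log_branch_on_def by auto
  have dL: "(L has_field_derivative deriv L z) (at z)"
    using holomorphic_derivI[OF hol assms(1,3)] .
  have "((\<lambda>w. exp (L w)) has_field_derivative exp (L z) * deriv L z) (at z)"
    using DERIV_chain2[OF DERIV_exp dL] by simp
  then have "((\<lambda>w. w) has_field_derivative exp (L z) * deriv L z) (at z)"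
    by (rule has_field_derivative_transform_within_open[OF _ assms(1,3)]) (simp add: exp_L)
  then have "z * deriv L z = 1"
    using DERIV_ident DERIV_unique exp_L[OF assms(3)] by metis
  with dL show ?thesis
    by (metis log_branch_on_nonzero[OF assms(2,3)] nonzero_eq_divide_eq mult.commute)
qed

definition falling_factorial :: "complex \<Rightarrow> nat \<Rightarrow> complex" where
  "falling_factorial c k = (\<Prod>i<k. c - of_nat i)"

lemma falling_factorial_Suc: "falling_factorial c (Suc k) = falling_factorial c k * (c - of_nat k)"
  by (simp add: falling_factorial_def)

lemma log_branch_on_power:
  assumes "log_branch_on L U" "z \<in> U"
  shows "exp (of_nat k * L z) = z ^ k"
  using assms unfolding log_branch_on_def by (simp add: exp_of_nat_mult)

lemma higher_deriv_exp_mult_log_branch: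
  assumes "open U" "log_branch_on L U" "z \<in> U"
  shows "(deriv ^^ k) (\<lambda>w. exp (c * L w)) z = falling_factorial c k * exp ((c - of_nat k) * L z)"
  using assms(3)
proof (induction k arbitrary: z)
  case 0
  then show ?case by (simp add: falling_factorial_def)
next
  case (Suc k)
  have "eventually (\<lambda>w. w \<in> U) (nhds z)"
    using eventually_nhds_in_open[OF assms(1) Suc.prems] .
  then have IH: "eventually (\<lambda>w. (deriv ^^ k) (\<lambda>w. exp (c * L w)) w
                   = falling_factorial c k * exp ((c - of_nat k) * L w)) (nhds z)"
    by (rule eventually_mono) (rule Suc.IH)
  have "exp ((c - of_nat (Suc k)) * L z) = exp ((c - of_nat k) * L z - L z)"
    by (simp add: algebra_simps)
  also have "\<dots> = exp ((c - of_nat k) * L z) / z"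
    using assms(2) Suc.prems by (simp add: exp_diff log_branch_on_def)
  finally have shift: "exp ((c - of_nat k) * L z) / z = exp ((c - of_nat (Suc k)) * L z)" ..
  have "(deriv ^^ Suc k) (\<lambda>w. exp (c * L w)) z
      = deriv (\<lambda>w. falling_factorial c k * exp ((c - of_nat k) * L w)) z"
    using deriv_cong_ev[OF IH refl] by simp
  also have "\<dots> = falling_factorial c k * exp ((c - of_nat k) * L z) * ((c - of_nat k) * (1 / z))"
    using log_branch_on_has_field_derivative[OF assms(1,2) Suc.prems]
    by (intro DERIV_imp_deriv) (auto intro!: derivative_eq_intros)
  also have "\<dots> = falling_factorial c (Suc k) * exp ((c - of_nat (Suc k)) * L z)"
    unfolding falling_factorial_Suc shift[symmetric] by simp
  finally show ?case .
qed

definition indicial_polynomial :: "nat \<Rightarrow> (nat \<Rightarrow> complex) \<Rightarrow> complex \<Rightarrow> complex" where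
  "indicial_polynomial M a c = falling_factorial c M + (\<Sum>k = 1..M - 1. a k * falling_factorial c k)"

lemma euler_cauchy_lhs_exp_mult_log_branch:
  assumes "open U" "log_branch_on L U" "z \<in> U"
  shows "euler_cauchy_lhs M a \<eta> (\<lambda>w. exp (c * L w)) z
       = (indicial_polynomial M a c - \<eta> ^ M) * exp (c * L z)"
proof -
  have "z ^ k * exp ((c - of_nat k) * L z) = exp (of_nat k * L z + (c - of_nat k) * L z)" for k
    by (simp add: exp_add log_branch_on_power[OF assms(2,3)])
  then have "z ^ k * (deriv ^^ k) (\<lambda>w. exp (c * L w)) z = falling_factorial c k * exp (c * L z)" for k
    by (simp add: higher_deriv_exp_mult_log_branch[OF assms] mult.left_commute algebra_simps)
  then show ?thesis
    by (simp add: euler_cauchy_lhs_def indicial_polynomial_def mult.assoc sum_distrib_left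
        algebra_simps mult_ac)
qed

lemma exp_mult_linear_independent:
  fixes \<alpha> c :: "'a \<Rightarrow> complex"
  assumes "finite S" "inj_on \<alpha> S" "open W" "W \<noteq> {}"
    and "\<forall>s\<in>W. (\<Sum>j\<in>S. c j * exp (\<alpha> j * s)) = 0"
  shows "\<forall>j\<in>S. c j = 0"
  using assms(1,2,5)
proof (induction S arbitrary: c rule: finite_induct)
  case empty
  then show ?case by simp
next
  case (insert a S)
  define f where "f s = (\<Sum>j\<in>insert a S. c j * exp (\<alpha> j * s))" for s
  \<comment> \<open>\<open>f' - \<alpha> a * f\<close> vanishes on \<open>W\<close> and no longer involves the term of \<open>a\<close>\<close>
  have "(\<Sum>j\<in>S. (c j * (\<alpha> j - \<alpha> a)) * exp (\<alpha> j * s)) = 0"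
    if s: "s \<in> W" for s
  proof -
    have "(f has_field_derivative (\<Sum>j\<in>insert a S. c j * \<alpha> j * exp (\<alpha> j * s))) (at s)"
      unfolding f_def[abs_def] by (auto intro!: derivative_eq_intros sum.cong simp: mult_ac)
    moreover have "(f has_field_derivative 0) (at s)"
      using insert.prems(2) by (intro has_field_derivative_transform_within_open[OF DERIV_const
          assms(3) s]) (simp add: f_def)
    ultimately have "(\<Sum>j\<in>insert a S. c j * \<alpha> j * exp (\<alpha> j * s)) = 0"
      using DERIV_unique by blast
    moreover have "f s = 0" using insert.prems(2) s by (simp add: f_def)
    ultimately have "(\<Sum>j\<in>insert a S. c j * \<alpha> j * exp (\<alpha> j * s)) - \<alpha> a * f s = 0"
      by simp
    then show ?thesis
      using insert.hyps by (simp add: f_def sum_distrib_left sum_subtractf algebra_simps)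
  qed
  moreover have "inj_on \<alpha> S" using insert.prems(1) by simp
  ultimately have "\<forall>j\<in>S. c j * (\<alpha> j - \<alpha> a) = 0"
    using insert.IH[of "\<lambda>j. c j * (\<alpha> j - \<alpha> a)"] by blast
  moreover have "\<alpha> j \<noteq> \<alpha> a" if "j \<in> S" for j
    using insert.prems(1) insert.hyps(2) that by (auto simp: inj_on_def)
  ultimately have cS: "\<forall>j\<in>S. c j = 0" by simp
  obtain s where "s \<in> W" using assms(4) by blast
  then have "c a = 0" using insert.prems(2) insert.hyps cS by auto
  with cS show ?case by simp
qed

lemma log_branch_exp_mult_linear_independent:
  assumes "open U" "U \<noteq> {}" "log_branch_on L U" "finite S" "inj_on c S"
    and "\<forall>z\<in>U. (\<Sum>j\<in>S. b j * exp (c j * L z)) = 0"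
  shows "\<forall>j\<in>S. b j = 0"
proof -
  have "L holomorphic_on U" using assms(3) by (simp add: log_branch_on_def)
  moreover have "inj_on L U" using assms(3) unfolding log_branch_on_def by (metis inj_onI)
  ultimately have "open (L ` U)" using open_mapping_thm3 assms(1) by blast
  then show ?thesis
    using exp_mult_linear_independent[OF assms(4,5), of "L ` U" b] assms(2,6) by blast
qed

definition reversed_indicial_polynomial :: "nat \<Rightarrow> (nat \<Rightarrow> complex) \<Rightarrow> complex \<Rightarrow> complex" where
  "reversed_indicial_polynomial M a t =
     (\<Prod>i<M. 1 - of_nat i * t) + (\<Sum>k = 1..M - 1. a k * t ^ (M - k) * (\<Prod>i<k. 1 - of_nat i * t))"

lemma power_mult_falling_factorial_inverse:
  assumes "t \<noteq> 0"
  shows "t ^ k * falling_factorial (1 / t) k = (\<Prod>i<k. 1 - of_nat i * t)"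
proof -
  have "t ^ k * falling_factorial (1 / t) k = (\<Prod>i<k. t * (1 / t - of_nat i))"
    by (simp add: falling_factorial_def prod.distrib)
  also have "\<dots> = (\<Prod>i<k. 1 - of_nat i * t)"
    by (rule prod.cong) (auto simp: assms field_simps)
  finally show ?thesis .
qed

lemma power_mult_indicial_polynomial_inverse:
  assumes "t \<noteq> 0"
  shows "t ^ M * indicial_polynomial M a (1 / t) = reversed_indicial_polynomial M a t"
proof -
  have "t ^ M * (a k * falling_factorial (1 / t) k) = a k * t ^ (M - k) * (\<Prod>i<k. 1 - of_nat i * t)"
    if "k \<in> {1..M - 1}" for k
  proof -
    have "M = (M - k) + k" using that by auto
    then have "t ^ M = t ^ (M - k) * t ^ k" by (metis power_add)
    then show ?thesis using power_mult_falling_factorial_inverse[OF assms, of k] by (simp add: mult_ac)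
  qed
  then have "t ^ M * (\<Sum>k = 1..M - 1. a k * falling_factorial (1 / t) k)
      = (\<Sum>k = 1..M - 1. a k * t ^ (M - k) * (\<Prod>i<k. 1 - of_nat i * t))"
    unfolding sum_distrib_left by (rule sum.cong[OF refl])
  then show ?thesis
    using power_mult_falling_factorial_inverse[OF assms, of M]
    by (simp add: indicial_polynomial_def reversed_indicial_polynomial_def distrib_left)
qed

lemma reversed_indicial_polynomial_0: "reversed_indicial_polynomial M a 0 = 1"
  by (auto simp: reversed_indicial_polynomial_def intro!: sum.neutral)

lemma holomorphic_inverse_nth_root:
  fixes q :: "complex \<Rightarrow> complex"
  assumes "q holomorphic_on S" "open S" "0 \<in> S" "q 0 = 1" "M > 0"
  obtains S' E where "open S'" "0 \<in> S'" "E holomorphic_on S'" "E 0 = 1"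
    "\<And>t. t \<in> S' \<Longrightarrow> E t ^ M * q t = 1"
proof
  define S' where "S' = S \<inter> q -` ball 1 1"
  show "open S'" unfolding S'_def
    using assms(1,2) by (intro continuous_open_preimage holomorphic_on_imp_continuous_on) auto
  show "0 \<in> S'" using assms(3,4) by (simp add: S'_def)
  have Re_q_pos: "Re (q t) > 0" if "t \<in> S'" for t
  proof -
    have "cmod (1 - q t) < 1" using that by (simp add: S'_def dist_norm)
    then show ?thesis using abs_Re_le_cmod[of "1 - q t"] by simp
  qed
  have q_slit: "q t \<notin> \<real>\<^sub>\<le>\<^sub>0" "q t \<noteq> 0" if "t \<in> S'" for t
    using Re_q_pos[OF that] by (auto simp: complex_nonpos_Reals_iff)
  define E where "E t = exp (- Ln (q t) / of_nat M)" for t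
  show "E holomorphic_on S'" unfolding E_def
    using q_slit holomorphic_on_subset[OF assms(1), of S'] assms(5)
    by (intro holomorphic_intros holomorphic_on_Ln') (auto simp: S'_def)
  show "E 0 = 1" by (simp add: E_def assms(4))
  show "E t ^ M * q t = 1" if "t \<in> S'" for t
  proof -
    have "E t ^ M = exp (- Ln (q t))"
      using assms(5) by (simp add: E_def flip: exp_of_nat_mult)
    then show ?thesis using q_slit(2)[OF that] by (simp add: exp_minus)
  qed
qed

lemma holomorphic_local_inverse:
  assumes "f holomorphic_on S" "open S" "\<xi> \<in> S" "deriv f \<xi> \<noteq> 0"
  obtains r g where "r > 0" "g holomorphic_on ball (f \<xi>) r" "g (f \<xi>) = \<xi>"
    "\<And>w. w \<in> ball (f \<xi>) r \<Longrightarrow> g w \<in> S \<and> f (g w) = w"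
proof -
  obtain \<rho> where "\<rho> > 0" "ball \<xi> \<rho> \<subseteq> S" and inj: "inj_on f (ball \<xi> \<rho>)"
    using has_complex_derivative_locally_injective[OF assms(1,3,2,4)] by blast
  then have hol: "f holomorphic_on ball \<xi> \<rho>" using holomorphic_on_subset[OF assms(1)] by blast
  obtain g where holg: "g holomorphic_on f ` ball \<xi> \<rho>" and gf: "\<And>z. z \<in> ball \<xi> \<rho> \<Longrightarrow> g (f z) = z"
    using holomorphic_has_inverse[OF hol open_ball inj] by metis
  have "open (f ` ball \<xi> \<rho>)" using open_mapping_thm3[OF hol open_ball inj] .
  moreover have "f \<xi> \<in> f ` ball \<xi> \<rho>" using \<open>\<rho> > 0\<close> by simp
  ultimately obtain r where "r > 0" and r: "ball (f \<xi>) r \<subseteq> f ` ball \<xi> \<rho>"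
    using openE by metis
  show thesis
  proof
    show "r > 0" by fact
    show "g holomorphic_on ball (f \<xi>) r" using holomorphic_on_subset[OF holg r] .
    show "g (f \<xi>) = \<xi>" using gf \<open>\<rho> > 0\<close> by simp
    fix w assume "w \<in> ball (f \<xi>) r"
    then obtain z where "z \<in> ball \<xi> \<rho>" "w = f z" using r by blast
    then show "g w \<in> S \<and> f (g w) = w" using gf \<open>ball \<xi> \<rho> \<subseteq> S\<close> by auto
  qed
qed

lemma power_equation_holomorphic_branch:
  fixes q :: "complex \<Rightarrow> complex"
  assumes "q holomorphic_on S" "open S" "0 \<in> S" "q 0 = 1" "M > 0"
  obtains r \<nu> where "r > 0" "\<nu> holomorphic_on ball 0 r" "\<nu> 0 = 1"
    "inj_on (\<lambda>\<epsilon>. \<epsilon> / \<nu> \<epsilon>) (ball 0 r)"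
    "\<And>\<epsilon>. \<epsilon> \<in> ball 0 r \<Longrightarrow> \<nu> \<epsilon> ^ M * q (\<epsilon> / \<nu> \<epsilon>) = 1"
proof -
  obtain S' E where S': "open S'" "0 \<in> S'" and holE: "E holomorphic_on S'"
    and E0: "E 0 = 1" and E_root: "\<And>t. t \<in> S' \<Longrightarrow> E t ^ M * q t = 1"
    using holomorphic_inverse_nth_root[OF assms] by metis
  \<comment> \<open>taking \<open>M\<close>-th roots, \<open>t ^ M = \<epsilon> ^ M * q t\<close> becomes \<open>G t = \<epsilon>\<close>, and \<open>G' 0 = 1\<close>\<close>
  define G where "G t = t * E t" for t
  have holG: "G holomorphic_on S'" unfolding G_def by (intro holomorphic_intros holE)
  have "(G has_field_derivative 1) (at 0)"
    using holomorphic_derivI[OF holE S'] unfolding G_def[abs_def]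
    by (auto intro!: derivative_eq_intros simp: E0)
  then have "deriv G 0 \<noteq> 0" by (simp add: DERIV_imp_deriv)
  then obtain r g where "r > 0" and holg: "g holomorphic_on ball 0 r" and "g 0 = 0"
    and g: "\<And>\<epsilon>. \<epsilon> \<in> ball 0 r \<Longrightarrow> g \<epsilon> \<in> S' \<and> G (g \<epsilon>) = \<epsilon>"
    using holomorphic_local_inverse[OF holG S'] unfolding G_def by (metis mult_zero_left)
  define \<nu> where "\<nu> = E \<circ> g"
  have g_eq: "g \<epsilon> = \<epsilon> / \<nu> \<epsilon>" and \<nu>_root: "\<nu> \<epsilon> ^ M * q (\<epsilon> / \<nu> \<epsilon>) = 1"
    if "\<epsilon> \<in> ball 0 r" for \<epsilon>
  proof -
    have E_g: "E (g \<epsilon>) ^ M * q (g \<epsilon>) = 1" using E_root g[OF that] by blast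
    then have "E (g \<epsilon>) \<noteq> 0" using \<open>M > 0\<close> by (auto simp: power_0_left)
    then show "g \<epsilon> = \<epsilon> / \<nu> \<epsilon>"
      using g[OF that] by (auto simp: \<nu>_def G_def field_simps)
    then show "\<nu> \<epsilon> ^ M * q (\<epsilon> / \<nu> \<epsilon>) = 1"
      using E_g by (simp add: \<nu>_def)
  qed
  show thesis
  proof
    show "r > 0" by fact
    show "\<nu> holomorphic_on ball 0 r" unfolding \<nu>_def
      using g by (intro holomorphic_on_compose_gen[OF holg holE]) auto
    show "\<nu> 0 = 1" by (simp add: \<nu>_def \<open>g 0 = 0\<close> E0)
    show "inj_on (\<lambda>\<epsilon>. \<epsilon> / \<nu> \<epsilon>) (ball 0 r)"
    proof (rule inj_onI)
      fix \<epsilon> \<delta> assume "\<epsilon> \<in> ball 0 r" "\<delta> \<in> ball 0 r" "\<epsilon> / \<nu> \<epsilon> = \<delta> / \<nu> \<delta>"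
      then show "\<epsilon> = \<delta>" using g g_eq by metis
    qed
  qed (rule \<nu>_root)
qed

lemma roots_of_unity_enumeration:
  assumes "M > 0"
  shows "inj_on (\<lambda>j. cis (2 * pi * real (j - 1) / real M)) {1..M}"
    and "j \<in> {1..M} \<Longrightarrow> cis (2 * pi * real (j - 1) / real M) ^ M = 1"
proof -
  have roots: "bij_betw (\<lambda>k. cis (2 * pi * real k / real M)) {..<M} {z. z ^ M = 1}"
    using Complex.bij_betw_roots_unity[OF assms] .
  have "inj_on (\<lambda>k. cis (2 * pi * real k / real M)) {..<M}"
    using roots by (simp add: bij_betw_def)
  moreover have "inj_on (\<lambda>j. j - 1) {1..M}" "(\<lambda>j. j - 1) ` {1..M} \<subseteq> {..<M}"
    by (auto simp: inj_on_def)
  ultimately show "inj_on (\<lambda>j. cis (2 * pi * real (j - 1) / real M)) {1..M}"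
    using comp_inj_on inj_on_subset by (metis (no_types, lifting) comp_def inj_on_cong)
  show "j \<in> {1..M} \<Longrightarrow> cis (2 * pi * real (j - 1) / real M) ^ M = 1"
    using bij_betw_apply[OF roots, of "j - 1"] by auto
qed

lemma indicial_polynomial_eq_from_reversed:
  assumes "\<delta> \<noteq> 0" "\<nu> \<noteq> 0" "\<nu> ^ M * reversed_indicial_polynomial M a (\<delta> / \<nu>) = 1"
  shows "indicial_polynomial M a (\<nu> / \<delta>) = (1 / \<delta>) ^ M"
proof -
  have "(\<delta> / \<nu>) ^ M * indicial_polynomial M a (\<nu> / \<delta>) = reversed_indicial_polynomial M a (\<delta> / \<nu>)"
    using power_mult_indicial_polynomial_inverse[of "\<delta> / \<nu>" M a] assms(1,2) by simp
  then show ?thesis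
    using assms by (simp add: power_divide field_simps)
qed

lemma indicial_polynomial_holomorphic_roots:
  assumes "M > 0"
  obtains r \<mu> where "r > 0" "\<And>j. \<mu> j holomorphic_on ball 0 r"
    "\<And>j. j \<in> {1..M} \<Longrightarrow> \<mu> j 0 ^ M = 1" "inj_on (\<lambda>j. \<mu> j 0) {1..M}"
    "\<And>\<epsilon> j. \<epsilon> \<in> ball 0 r \<Longrightarrow> \<epsilon> \<noteq> 0 \<Longrightarrow> j \<in> {1..M} \<Longrightarrow>
       indicial_polynomial M a (\<mu> j \<epsilon> / \<epsilon>) = (1 / \<epsilon>) ^ M"
    "\<And>\<epsilon>. \<epsilon> \<in> ball 0 r \<Longrightarrow> \<epsilon> \<noteq> 0 \<Longrightarrow> inj_on (\<lambda>j. \<mu> j \<epsilon> / \<epsilon>) {1..M}"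
proof -
  have "reversed_indicial_polynomial M a holomorphic_on UNIV"
    unfolding reversed_indicial_polynomial_def[abs_def] by (intro holomorphic_intros)
  from power_equation_holomorphic_branch[OF this open_UNIV UNIV_I reversed_indicial_polynomial_0 assms]
  obtain r \<nu> where "r > 0" and hol\<nu>: "\<nu> holomorphic_on ball 0 r" and "\<nu> 0 = 1"
    and inj\<nu>: "inj_on (\<lambda>\<delta>. \<delta> / \<nu> \<delta>) (ball 0 r)"
    and \<nu>_root: "\<And>\<delta>. \<delta> \<in> ball 0 r \<Longrightarrow> \<nu> \<delta> ^ M * reversed_indicial_polynomial M a (\<delta> / \<nu> \<delta>) = 1"
    by metis
  have \<nu>_nonzero: "\<nu> \<delta> \<noteq> 0" if "\<delta> \<in> ball 0 r" for \<delta>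
    using \<nu>_root[OF that] assms by (auto simp: power_0_left)
  define \<omega> where "\<omega> j = cis (2 * pi * real (j - 1) / real M)" for j :: nat
  have \<omega>_nonzero: "\<omega> j \<noteq> 0" for j by (simp add: \<omega>_def)
  have ball_div_\<omega>: "\<epsilon> / \<omega> j \<in> ball 0 r" if "\<epsilon> \<in> ball 0 r" for \<epsilon> j
    using that by (simp add: norm_divide \<omega>_def)
  \<comment> \<open>replacing \<open>\<epsilon>\<close> by \<open>\<epsilon> / \<omega> j\<close> leaves \<open>\<epsilon> ^ M\<close> unchanged: this gives the \<open>M\<close> branches\<close>
  define \<mu> where "\<mu> j \<epsilon> = \<omega> j * \<nu> (\<epsilon> / \<omega> j)" for j \<epsilon>
  have \<mu>_div: "\<mu> j \<epsilon> / \<epsilon> = \<nu> (\<epsilon> / \<omega> j) / (\<epsilon> / \<omega> j)" for j \<epsilon>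
    using \<omega>_nonzero[of j] by (simp add: \<mu>_def)
  show thesis
  proof
    show "r > 0" by fact
    show "\<mu> j holomorphic_on ball 0 r" for j
      unfolding \<mu>_def using ball_div_\<omega> \<omega>_nonzero
      by (intro holomorphic_intros holomorphic_on_compose_gen[OF _ hol\<nu>, unfolded o_def]) auto
    show "\<mu> j 0 ^ M = 1" if "j \<in> {1..M}" for j
      using roots_of_unity_enumeration(2)[OF assms that] \<open>\<nu> 0 = 1\<close> by (simp add: \<mu>_def \<omega>_def)
    show "inj_on (\<lambda>j. \<mu> j 0) {1..M}"
      using roots_of_unity_enumeration(1)[OF assms] \<open>\<nu> 0 = 1\<close> by (simp add: \<mu>_def \<omega>_def)
  next
    fix \<epsilon> :: complex and j assume \<epsilon>: "\<epsilon> \<in> ball 0 r" "\<epsilon> \<noteq> 0" and j: "j \<in> {1..M}"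
    define \<delta> where "\<delta> = \<epsilon> / \<omega> j"
    have "\<delta> \<in> ball 0 r" "\<delta> \<noteq> 0" using ball_div_\<omega>[OF \<epsilon>(1)] \<epsilon>(2) \<omega>_nonzero by (auto simp: \<delta>_def)
    then have "indicial_polynomial M a (\<nu> \<delta> / \<delta>) = (1 / \<delta>) ^ M"
      using indicial_polynomial_eq_from_reversed \<nu>_nonzero \<nu>_root by blast
    then have "indicial_polynomial M a (\<mu> j \<epsilon> / \<epsilon>) = (\<omega> j / \<epsilon>) ^ M"
      unfolding \<mu>_div \<delta>_def by simp
    also have "\<dots> = (1 / \<epsilon>) ^ M"
      using roots_of_unity_enumeration(2)[OF assms j] by (simp add: \<omega>_def power_divide)
    finally show "indicial_polynomial M a (\<mu> j \<epsilon> / \<epsilon>) = (1 / \<epsilon>) ^ M" .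
  next
    fix \<epsilon> :: complex assume \<epsilon>: "\<epsilon> \<in> ball 0 r" "\<epsilon> \<noteq> 0"
    show "inj_on (\<lambda>j. \<mu> j \<epsilon> / \<epsilon>) {1..M}"
    proof (rule inj_onI)
      fix i j assume ij: "i \<in> {1..M}" "j \<in> {1..M}" "\<mu> i \<epsilon> / \<epsilon> = \<mu> j \<epsilon> / \<epsilon>"
      then have "(\<epsilon> / \<omega> i) / \<nu> (\<epsilon> / \<omega> i) = (\<epsilon> / \<omega> j) / \<nu> (\<epsilon> / \<omega> j)"
        unfolding \<mu>_div by (metis divide_divide_eq_right divide_self_if mult_1)
      then have "\<epsilon> / \<omega> i = \<epsilon> / \<omega> j"
        using inj_onD[OF inj\<nu>] ball_div_\<omega>[OF \<epsilon>(1)] by blast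
      then have "\<omega> i = \<omega> j" using \<epsilon>(2) \<omega>_nonzero by (simp add: field_simps)
      then show "i = j"
        using roots_of_unity_enumeration(1)[OF assms] ij(1,2) unfolding \<omega>_def inj_on_def by blast
    qed
  qed
qed

lemma wkb_exponent_taylor_coefficients:
  assumes "f holomorphic_on ball 0 r" "\<epsilon> \<in> ball 0 r" "\<epsilon> \<noteq> 0"
  defines "h \<equiv> \<lambda>k. (deriv ^^ k) f 0 / fact k"
  shows "summable (\<lambda>k. h k * \<epsilon> powi (int k - 1))" and "wkb_exponent h \<epsilon> = f \<epsilon> / \<epsilon>"
proof -
  have "(\<lambda>k. h k * \<epsilon> powi (int k - 1)) = (\<lambda>k. (deriv ^^ k) f 0 / fact k * (\<epsilon> - 0) ^ k / \<epsilon>)"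
    using assms(3) by (simp add: h_def power_int_diff)
  then have "(\<lambda>k. h k * \<epsilon> powi (int k - 1)) sums (f \<epsilon> / \<epsilon>)"
    using sums_divide[OF holomorphic_power_series[OF assms(1,2)]] by simp
  then show "summable (\<lambda>k. h k * \<epsilon> powi (int k - 1))" "wkb_exponent h \<epsilon> = f \<epsilon> / \<epsilon>"
    by (auto simp: wkb_exponent_def sums_iff)
qed

theorem theorem6:
  fixes M :: nat and a :: "nat \<Rightarrow> complex"
  assumes "M \<ge> 2"
  shows "\<exists>(h :: nat \<Rightarrow> nat \<Rightarrow> complex) (r :: real).
    r > 0 \<and>
    (\<forall>j\<in>{1..M}. h j 0 ^ M = 1) \<and> inj_on (\<lambda>j. h j 0) {1..M} \<and>
    (\<forall>\<epsilon>::complex. 0 < norm \<epsilon> \<and> norm \<epsilon> < r \<longrightarrow>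
       (\<forall>j\<in>{1..M}. summable (\<lambda>k. h j k * \<epsilon> powi (int k - 1))) \<and>
       (\<forall>(U :: complex set) L. open U \<and> U \<noteq> {} \<and> 0 \<notin> U \<and> log_branch_on L U \<longrightarrow>
          (\<forall>j\<in>{1..M}. \<forall>z\<in>U.
             euler_cauchy_lhs M a (1 / \<epsilon>) (\<lambda>w. exp (wkb_exponent (h j) \<epsilon> * L w)) z = 0) \<and>
          (\<forall>c :: nat \<Rightarrow> complex.
             (\<forall>z\<in>U. (\<Sum>j = 1..M. c j * exp (wkb_exponent (h j) \<epsilon> * L z)) = 0)
             \<longrightarrow> (\<forall>j\<in>{1..M}. c j = 0))))"
proof -
  have "M > 0" using assms by simp
  then obtain r \<mu> where "r > 0" and hol\<mu>: "\<And>j. \<mu> j holomorphic_on ball 0 r"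
    and roots_of_unity: "\<And>j. j \<in> {1..M} \<Longrightarrow> \<mu> j 0 ^ M = 1" "inj_on (\<lambda>j. \<mu> j 0) {1..M}"
    and indicial_roots: "\<And>\<epsilon> j. \<epsilon> \<in> ball 0 r \<Longrightarrow> \<epsilon> \<noteq> 0 \<Longrightarrow> j \<in> {1..M} \<Longrightarrow>
                           indicial_polynomial M a (\<mu> j \<epsilon> / \<epsilon>) = (1 / \<epsilon>) ^ M"
    and distinct_roots: "\<And>\<epsilon>. \<epsilon> \<in> ball 0 r \<Longrightarrow> \<epsilon> \<noteq> 0 \<Longrightarrow> inj_on (\<lambda>j. \<mu> j \<epsilon> / \<epsilon>) {1..M}"
    using indicial_polynomial_holomorphic_roots[of M a] by blast
  define h where "h j = (\<lambda>k. (deriv ^^ k) (\<mu> j) 0 / fact k)" for j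
  show ?thesis
  proof (intro exI conjI allI impI ballI)
    fix \<epsilon> :: complex assume "0 < norm \<epsilon> \<and> norm \<epsilon> < r"
    then have \<epsilon>: "\<epsilon> \<in> ball 0 r" "\<epsilon> \<noteq> 0" by auto
    note taylor = wkb_exponent_taylor_coefficients[OF hol\<mu> \<epsilon>]
    show "summable (\<lambda>k. h j k * \<epsilon> powi (int k - 1))" for j
      using taylor(1) by (simp add: h_def)
    fix U L assume "open U \<and> U \<noteq> {} \<and> 0 \<notin> U \<and> log_branch_on L U"
    then have U: "open U" "U \<noteq> {}" "log_branch_on L U" by auto
    show "euler_cauchy_lhs M a (1 / \<epsilon>) (\<lambda>w. exp (wkb_exponent (h j) \<epsilon> * L w)) z = 0"
      if "j \<in> {1..M}" "z \<in> U" for j z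
      using euler_cauchy_lhs_exp_mult_log_branch[OF U(1,3) that(2), of M a "1 / \<epsilon>" "\<mu> j \<epsilon> / \<epsilon>"]
        indicial_roots[OF \<epsilon> that(1)] by (simp add: h_def taylor(2))
    show "c j = 0"
      if "\<forall>z\<in>U. (\<Sum>j = 1..M. c j * exp (wkb_exponent (h j) \<epsilon> * L z)) = 0" "j \<in> {1..M}"
      for c j
      using log_branch_exp_mult_linear_independent[OF U finite_atLeastAtMost distinct_roots[OF \<epsilon>]]
        that by (simp add: h_def taylor(2))
  qed (use \<open>r > 0\<close> roots_of_unity in \<open>simp_all add: h_def\<close>)
qed

end
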